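(* Let $G=(V,E)$ be a geodetic graph and let $(S,T)$ be a partition of $V$ into two sets such that: (1) $S$ and $T$ are geodetically closed, i.e., for all $u,v\in S$ the shortest path from $u$ to $v$ contains only vertices of $S$, and likewise for $T$; (2) for any two distinct edges $\{u,v\}$ and $\{w,x\}$ of the cut set with $u,w\in S$ and $v,x\in T$, the number $d(u,w)+d(v,x)$ is odd. Then for every integer $k\ge 0$, the graph $G'$ obtained from $G$ by subdividing every edge of the cut set with $k$ new vertices (i.e., replacing each such edge by a path of length $k+1$) is geodetic.
   Context: All graphs are finite, simple and undirected; $d(u,v)$ denotes the distance in $G$. A graph is geodetic if between any two vertices there is at most one shortest path. The cut set of the partition $(S,T)$ is the set of edges of $G$ with one endpoint in $S$ and the other in $T$. *)

theory Defs
  imports Main "HOL-Library.Extended_Nat"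
begin

definition simple_graph :: "'a set \<Rightarrow> 'a set set \<Rightarrow> bool" where
  "simple_graph V E \<longleftrightarrow> finite V \<and>
     (\<forall>e\<in>E. \<exists>u v. e = {u, v} \<and> u \<noteq> v \<and> u \<in> V \<and> v \<in> V)"

definition walk :: "'a set \<Rightarrow> 'a set set \<Rightarrow> 'a list \<Rightarrow> bool" where
  "walk V E p \<longleftrightarrow> p \<noteq> [] \<and> set p \<subseteq> V \<and>
     (\<forall>i. Suc i < length p \<longrightarrow> {p ! i, p ! Suc i} \<in> E)"

definition dist :: "'a set \<Rightarrow> 'a set set \<Rightarrow> 'a \<Rightarrow> 'a \<Rightarrow> enat" where
  "dist V E u v = Inf {enat (length p - 1) | p. walk V E p \<and> hd p = u \<and> last p = v}"

definition shortest_path :: "'a set \<Rightarrow> 'a set set \<Rightarrow> 'a \<Rightarrow> 'a \<Rightarrow> 'a list \<Rightarrow> bool" where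
  "shortest_path V E u v p \<longleftrightarrow> walk V E p \<and> hd p = u \<and> last p = v \<and>
     enat (length p - 1) = dist V E u v"

definition geodetic :: "'a set \<Rightarrow> 'a set set \<Rightarrow> bool" where
  "geodetic V E \<longleftrightarrow> (\<forall>u\<in>V. \<forall>v\<in>V. \<forall>p q.
     shortest_path V E u v p \<and> shortest_path V E u v q \<longrightarrow> p = q)"

definition geodetically_closed :: "'a set \<Rightarrow> 'a set set \<Rightarrow> 'a set \<Rightarrow> bool" where
  "geodetically_closed V E S \<longleftrightarrow> (\<forall>u\<in>S. \<forall>v\<in>S. \<forall>p.
     shortest_path V E u v p \<longrightarrow> set p \<subseteq> S)"

definition cut_set :: "'a set set \<Rightarrow> 'a set \<Rightarrow> 'a set \<Rightarrow> 'a set set" where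
  "cut_set E S T = {e \<in> E. \<exists>u\<in>S. \<exists>v\<in>T. e = {u, v}}"

definition cut_pairs :: "'a set set \<Rightarrow> 'a set \<Rightarrow> 'a set \<Rightarrow> ('a \<times> 'a) set" where
  "cut_pairs E S T = {(u, v). u \<in> S \<and> v \<in> T \<and> {u, v} \<in> E}"

text \<open>The i-th vertex (0 \<le> i \<le> k+1) on the path of length k+1 replacing cut edge (u,v).\<close>
definition sub_node :: "nat \<Rightarrow> 'a \<Rightarrow> 'a \<Rightarrow> nat \<Rightarrow> 'a + ('a \<times> 'a \<times> nat)" where
  "sub_node k u v i = (if i = 0 then Inl u else if i = Suc k then Inl v else Inr (u, v, i))"

definition subdiv_V :: "'a set \<Rightarrow> 'a set set \<Rightarrow> 'a set \<Rightarrow> 'a set \<Rightarrow> nat \<Rightarrow> ('a + ('a \<times> 'a \<times> nat)) set" where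
  "subdiv_V V E S T k = Inl ` V \<union>
     {Inr (u, v, i) | u v i. (u, v) \<in> cut_pairs E S T \<and> 1 \<le> i \<and> i \<le> k}"

definition subdiv_E :: "'a set set \<Rightarrow> 'a set \<Rightarrow> 'a set \<Rightarrow> nat \<Rightarrow> ('a + ('a \<times> 'a \<times> nat)) set set" where
  "subdiv_E E S T k =
     {{Inl a, Inl b} | a b. {a, b} \<in> E - cut_set E S T} \<union>
     {{sub_node k u v i, sub_node k u v (Suc i)} | u v i. (u, v) \<in> cut_pairs E S T \<and> i \<le> k}"

end

theory Submission
  imports Defs
begin

lemma walk_Nil [simp]: "\<not> walk V E []"
  by (simp add: walk_def)

lemma walk_singleton [simp]: "walk V E [x] \<longleftrightarrow> x \<in> V"
  by (simp add: walk_def)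

lemma walk_Cons_Cons: "walk V E (x # y # p) \<longleftrightarrow> x \<in> V \<and> {x, y} \<in> E \<and> walk V E (y # p)"
  unfolding walk_def
proof safe
  fix i assume "\<forall>i. Suc i < length (x # y # p) \<longrightarrow> {(x # y # p) ! i, (x # y # p) ! Suc i} \<in> E"
    and "Suc i < length (y # p)"
  then show "{(y # p) ! i, (y # p) ! Suc i} \<in> E" by (metis Suc_less_eq length_Cons nth_Cons_Suc)
next
  fix i assume "{x, y} \<in> E" "\<forall>i. Suc i < length (y # p) \<longrightarrow> {(y # p) ! i, (y # p) ! Suc i} \<in> E"
    and "Suc i < length (x # y # p)"
  then show "{(x # y # p) ! i, (x # y # p) ! Suc i} \<in> E" by (cases i) auto
qed auto

lemma walk_snoc_iff:
  "q \<noteq> [] \<Longrightarrow> walk V E (q @ [y]) \<longleftrightarrow> walk V E q \<and> {last q, y} \<in> E \<and> y \<in> V"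
  by (induction q rule: induct_list012) (simp_all add: walk_Cons_Cons conj_ac)

lemma walk_nonempty: "walk V E p \<Longrightarrow> p \<noteq> []"
  by (simp add: walk_def)

lemma walk_set: "walk V E p \<Longrightarrow> set p \<subseteq> V"
  by (simp add: walk_def)

lemma walk_nth_edge: "walk V E p \<Longrightarrow> Suc i < length p \<Longrightarrow> {p ! i, p ! Suc i} \<in> E"
  by (simp add: walk_def)

lemma walk_snoc: "walk V E p \<Longrightarrow> {last p, y} \<in> E \<Longrightarrow> y \<in> V \<Longrightarrow> walk V E (p @ [y])"
  by (metis walk_nonempty walk_snoc_iff)

lemma walk_append:
  "walk V E p \<Longrightarrow> walk V E q \<Longrightarrow> last p = hd q \<Longrightarrow> walk V E (p @ tl q)"
proof (induction p rule: induct_list012)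
  case (2 x)
  then show ?case by (cases q) (auto simp: walk_def)
qed (simp_all add: walk_Cons_Cons)

lemma walk_rev: "walk V E p \<Longrightarrow> walk V E (rev p)"
proof (induction p rule: induct_list012)
  case (3 x y p)
  then have "walk V E (rev (y # p))" "{y, x} \<in> E" "x \<in> V"
    by (simp_all add: walk_Cons_Cons insert_commute)
  then show ?case using walk_snoc[of V E "rev (y # p)" x] by simp
qed auto

lemma walk_take: "walk V E p \<Longrightarrow> i < length p \<Longrightarrow> walk V E (take (Suc i) p)"
  unfolding walk_def by (auto dest: in_set_takeD)

lemma walk_drop: "walk V E p \<Longrightarrow> i < length p \<Longrightarrow> walk V E (drop i p)"
  unfolding walk_def by (auto dest: in_set_dropD simp: add.commute)

lemma dist_le_walk:
  "walk V E p \<Longrightarrow> hd p = u \<Longrightarrow> last p = v \<Longrightarrow> dist V E u v \<le> enat (length p - 1)"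
  unfolding dist_def by (rule Inf_lower) blast

lemma dist_greatest:
  "(\<And>p. walk V E p \<Longrightarrow> hd p = u \<Longrightarrow> last p = v \<Longrightarrow> f \<le> enat (length p - 1))
    \<Longrightarrow> f \<le> dist V E u v"
  unfolding dist_def by (rule Inf_greatest) blast

lemma shortest_path_exists:
  assumes "dist V E u v \<noteq> \<infinity>"
  obtains p where "shortest_path V E u v p"
proof -
  let ?A = "{enat (length p - 1) | p. walk V E p \<and> hd p = u \<and> last p = v}"
  have "?A \<noteq> {}"
  proof
    assume "?A = {}"
    have "dist V E u v = Inf ?A" by (simp only: dist_def)
    also have "\<dots> = \<infinity>" unfolding \<open>?A = {}\<close> by (simp add: top_enat_def)
    finally show False using assms by simp
  qed
  then have "Inf ?A \<in> ?A" by (meson ex_in_conv wellorder_InfI)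
  then obtain p where "walk V E p" "hd p = u" "last p = v" "enat (length p - 1) = Inf ?A"
    by auto
  then show ?thesis by (intro that) (simp add: shortest_path_def dist_def)
qed

lemma dist_refl: "u \<in> V \<Longrightarrow> dist V E u u = 0"
  using dist_le_walk[of V E "[u]" u u] by (simp add: zero_enat_def[symmetric])

lemma dist_ge_1: "u \<noteq> v \<Longrightarrow> 1 \<le> dist V E u v"
proof (rule dist_greatest)
  fix p assume "walk V E p" "hd p = u" "last p = v" "u \<noteq> v"
  then have "length p \<noteq> 1"
    by (auto simp: length_Suc_conv)
  moreover have "p \<noteq> []" using \<open>walk V E p\<close> by (rule walk_nonempty)
  ultimately have "2 \<le> length p" by (cases "length p") auto
  then show "1 \<le> enat (length p - 1)" by (simp add: one_enat_def)
qed

lemma dist_sym: "dist V E u v = dist V E v u"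
proof -
  have "dist V E u v \<le> dist V E v u" for u v
    by (rule dist_greatest) (metis dist_le_walk walk_rev hd_rev last_rev length_rev)
  then show ?thesis by (metis antisym)
qed

lemma dist_via: "dist V E u w \<le> dist V E u v + dist V E v w"
proof (cases "dist V E u v = \<infinity> \<or> dist V E v w = \<infinity>")
  case False
  then obtain p q where p: "shortest_path V E u v p" and q: "shortest_path V E v w q"
    by (metis shortest_path_exists)
  then have ne: "p \<noteq> []" "q \<noteq> []" by (auto simp: shortest_path_def walk_def)
  have "walk V E (p @ tl q)" using p q walk_append by (metis shortest_path_def)
  moreover have "hd (p @ tl q) = u" using p ne by (simp add: shortest_path_def)
  moreover have "last (p @ tl q) = w"
    using p q ne by (cases "tl q = []") (auto simp: shortest_path_def last_tl, metis last_ConsL list.collapse)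
  ultimately have "dist V E u w \<le> enat (length (p @ tl q) - 1)" by (rule dist_le_walk)
  also have "\<dots> = enat (length p - 1) + enat (length q - 1)" using ne by (cases p; cases q) auto
  also have "\<dots> = dist V E u v + dist V E v w" using p q by (simp add: shortest_path_def)
  finally show ?thesis .
qed auto

lemma dist_edge: "{y, z} \<in> E \<Longrightarrow> z \<in> V \<Longrightarrow> dist V E x z \<le> dist V E x y + 1"
proof (cases "dist V E x y = \<infinity>")
  case False
  assume e: "{y, z} \<in> E" "z \<in> V"
  obtain p where p: "shortest_path V E x y p" using False by (rule shortest_path_exists)
  then have "walk V E (p @ [z])" "p \<noteq> []" using e walk_snoc by (auto simp: shortest_path_def)
  then have "dist V E x z \<le> enat (length (p @ [z]) - 1)"
    using p dist_le_walk by (metis hd_append2 last_snoc shortest_path_def)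
  moreover obtain n where n: "length p = Suc n" using \<open>p \<noteq> []\<close> by (cases p) auto
  moreover have "dist V E x y = enat n" using p n by (simp add: shortest_path_def)
  ultimately show ?thesis by (simp add: one_enat_def)
qed simp

lemma dist_edge_le_1: "{y, z} \<in> E \<Longrightarrow> y \<in> V \<Longrightarrow> z \<in> V \<Longrightarrow> dist V E y z \<le> 1"
  using dist_edge[of y z E V y] by (simp add: dist_refl)

lemma dist_eq_potential:
  fixes F :: "'a \<Rightarrow> enat"
  assumes s: "s \<in> V" "F s = 0"
    and lip: "\<And>b c. {b, c} \<in> E \<Longrightarrow> F c \<le> F b + 1"
    and descent: "\<And>b. b \<in> V \<Longrightarrow> b \<noteq> s \<Longrightarrow> F b \<noteq> \<infinity> \<Longrightarrow> \<exists>c\<in>V. {b, c} \<in> E \<and> F c + 1 \<le> F b"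
    and b: "b \<in> V"
  shows "dist V E s b = F b"
proof (rule antisym)
  have "F (last p) \<le> enat (length p - 1)" if "walk V E p" "hd p = s" for p
    using that
  proof (induction p rule: rev_induct)
    case (snoc x xs)
    show ?case
    proof (cases "xs = []")
      case True
      then show ?thesis using snoc.prems s by simp
    next
      case False
      then have "walk V E xs" "{last xs, x} \<in> E" "hd xs = s"
        using snoc.prems walk_snoc_iff[OF False] by auto
      then have "F x \<le> enat (length xs - 1) + 1" using snoc.IH lip by (metis add_right_mono order_trans)
      then show ?thesis using False by (simp add: one_enat_def)
    qed
  qed simp
  then show "F b \<le> dist V E s b" by (intro dist_greatest) blast
next
  have "dist V E s b \<le> enat m" if "b \<in> V" "F b = enat m" for b m
    using that
  proof (induction m arbitrary: b rule: less_induct)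
    case (less m b)
    show ?case
    proof (cases "b = s")
      case True
      then show ?thesis using s dist_refl by (metis zero_le)
    next
      case False
      then obtain c where c: "c \<in> V" "{b, c} \<in> E" "F c + 1 \<le> F b"
        using descent[OF less.prems(1) False] less.prems(2) by auto
      then obtain m' where m': "F c = enat m'" "m' < m" using less.prems
        by (cases "F c") (auto simp: one_enat_def)
      have "dist V E s b \<le> dist V E s c + 1"
        using dist_edge c(2) less.prems(1) by (metis insert_commute)
      also have "\<dots> \<le> enat m' + 1" using less.IH[OF m'(2) c(1) m'(1)] by (rule add_right_mono)
      also have "\<dots> \<le> enat m" using m'(2) by (simp add: one_enat_def)
      finally show ?thesis .
    qed
  qed
  then show "dist V E s b \<le> F b" using b by (cases "F b") auto
qed

lemma shortest_path_rev: "shortest_path V E u v p \<Longrightarrow> shortest_path V E v u (rev p)"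
  by (auto simp: shortest_path_def walk_rev hd_rev last_rev dist_sym)

lemma shortest_path_length_eq:
  "shortest_path V E a b p \<Longrightarrow> shortest_path V E a b q \<Longrightarrow> length p = length q"
proof -
  assume p: "shortest_path V E a b p" and q: "shortest_path V E a b q"
  then have "enat (length p - 1) = dist V E a b" "enat (length q - 1) = dist V E a b"
    by (simp_all add: shortest_path_def)
  then have "length p - 1 = length q - 1" by (metis enat.inject)
  moreover have "p \<noteq> []" "q \<noteq> []" using p q walk_nonempty by (auto simp: shortest_path_def)
  ultimately show ?thesis by (cases p; cases q) auto
qed

lemma shortest_path_butlast:
  assumes p: "shortest_path V E a b (q @ [b])" and q: "q \<noteq> []"
  shows "shortest_path V E a (last q) q \<and> {last q, b} \<in> E \<and> dist V E a (last q) + 1 = dist V E a b"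
proof -
  have "walk V E (q @ [b])" "hd (q @ [b]) = a" using p unfolding shortest_path_def by blast+
  then have w: "walk V E q" "{last q, b} \<in> E" "b \<in> V" "hd q = a"
    unfolding walk_snoc_iff[OF q] using q by simp_all
  obtain L where L: "length q = Suc L" using q by (cases q) auto
  then have ab: "dist V E a b = enat (Suc L)" using p by (simp add: shortest_path_def)
  have "dist V E a (last q) \<le> enat L" using dist_le_walk[OF w(1) w(4)] L by simp
  moreover have "dist V E a b \<le> dist V E a (last q) + 1" by (rule dist_edge[OF w(2,3)])
  moreover obtain m where m: "dist V E a (last q) = enat m"
    using calculation(1) by (cases "dist V E a (last q)") auto
  ultimately have "m = L" using ab by (simp add: one_enat_def)
  then show ?thesis using w ab m L by (simp add: shortest_path_def one_enat_def)
qed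

lemma shortest_path_snoc:
  assumes p: "shortest_path V E a c p" and b: "{c, b} \<in> E" "b \<in> V"
    and d: "dist V E a c + 1 = dist V E a b"
  shows "shortest_path V E a b (p @ [b])"
proof -
  have w: "walk V E p" "hd p = a" "last p = c" and l: "enat (length p - 1) = dist V E a c"
    using p by (simp_all add: shortest_path_def)
  obtain n where n: "length p = Suc n" using w(1) walk_nonempty by (cases p) auto
  have "enat (length (p @ [b]) - 1) = dist V E a b"
    using d l[symmetric] n by (simp add: one_enat_def)
  moreover have "walk V E (p @ [b])" using w b walk_snoc by metis
  ultimately show ?thesis using w walk_nonempty[OF w(1)] by (simp add: shortest_path_def)
qed

lemma predecessor_exists:
  assumes "dist V E a b \<noteq> \<infinity>" "a \<noteq> b"
  obtains p c where "shortest_path V E a b p" "c \<in> set p" "{c, b} \<in> E"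
    "dist V E a c + 1 = dist V E a b"
proof -
  obtain p where p: "shortest_path V E a b p" using assms(1) by (rule shortest_path_exists)
  then have ne: "p \<noteq> []" and hl: "hd p = a" "last p = b"
    by (auto simp: shortest_path_def walk_def)
  define q where "q = butlast p"
  have pq: "p = q @ [b]" unfolding q_def using ne hl by (metis append_butlast_last_id)
  have q: "q \<noteq> []"
  proof
    assume "q = []"
    then have "a = b" using pq hl by simp
    with assms(2) show False ..
  qed
  have "shortest_path V E a b (q @ [b])" using p pq by simp
  then have "{last q, b} \<in> E \<and> dist V E a (last q) + 1 = dist V E a b"
    using shortest_path_butlast[OF _ q] by simp
  moreover have "last q \<in> set p" using \<open>q \<noteq> []\<close> pq by simp
  ultimately show ?thesis using that[OF p] by simp
qed

definition unique_predecessor :: "'a set \<Rightarrow> 'a set set \<Rightarrow> 'a \<Rightarrow> 'a \<Rightarrow> bool" where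
  "unique_predecessor V E a b \<longleftrightarrow> (\<forall>c1 c2. {c1, b} \<in> E \<longrightarrow> {c2, b} \<in> E \<longrightarrow>
     dist V E a c1 + 1 = dist V E a b \<longrightarrow> dist V E a c2 + 1 = dist V E a b \<longrightarrow> c1 = c2)"

lemma geodetic_imp_unique_predecessor:
  assumes "geodetic V E" "a \<in> V" "b \<in> V" "dist V E a b \<noteq> \<infinity>"
  shows "unique_predecessor V E a b"
  unfolding unique_predecessor_def
proof (intro allI impI)
  fix c1 c2
  assume e: "{c1, b} \<in> E" "{c2, b} \<in> E"
    and d: "dist V E a c1 + 1 = dist V E a b" "dist V E a c2 + 1 = dist V E a b"
  have "dist V E a c1 \<noteq> \<infinity>" "dist V E a c2 \<noteq> \<infinity>"
    using d assms(4) by (metis plus_eq_infty_iff_enat)+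
  then obtain p1 p2 where p: "shortest_path V E a c1 p1" "shortest_path V E a c2 p2"
    using shortest_path_exists by metis
  have "shortest_path V E a b (p1 @ [b])" "shortest_path V E a b (p2 @ [b])"
    using shortest_path_snoc[OF p(1) e(1) assms(3) d(1)] shortest_path_snoc[OF p(2) e(2) assms(3) d(2)] .
  then have "p1 @ [b] = p2 @ [b]" using assms(1-3) unfolding geodetic_def by blast
  then show "c1 = c2" using p by (simp add: shortest_path_def)
qed

text \<open>Two distinct shortest paths of minimal length differ both in their first and in their
  last step, so it suffices to check uniqueness of one of the two.\<close>

lemma geodetic_if_unique_predecessor:
  assumes uniq: "\<And>a b. a \<in> V \<Longrightarrow> b \<in> V \<Longrightarrow> dist V E a b \<noteq> \<infinity> \<Longrightarrow>
      unique_predecessor V E a b \<or> unique_predecessor V E b a"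
  shows "geodetic V E"
proof -
  have "p = q" if "length p = n" "shortest_path V E a b p" "shortest_path V E a b q" for n a b p q
    using that
  proof (induction n arbitrary: a b p q)
    case 0
    then show ?case by (simp add: shortest_path_def)
  next
    case (Suc n)
    have last_step: "p = q"
      if p: "length p = Suc n" "shortest_path V E a b p" and q: "shortest_path V E a b q"
        and u: "unique_predecessor V E a b" for a b p q
    proof (cases n)
      case 0
      then have "length p = 1" "length q = 1"
        using p(1) shortest_path_length_eq[OF p(2) q] by simp_all
      then obtain x y where "p = [x]" "q = [y]" by (auto simp: length_Suc_conv)
      then show ?thesis using p(2) q by (simp add: shortest_path_def)
    next
      case (Suc m)
      have lq: "length q = Suc n" using p(1) shortest_path_length_eq[OF p(2) q] by simp
      define p' q' where "p' = butlast p" and "q' = butlast q"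
      have "p \<noteq> []" "q \<noteq> []" "last p = b" "last q = b"
        using p(2) q walk_nonempty by (auto simp: shortest_path_def)
      then have pb: "p = p' @ [b]" and qb: "q = q' @ [b]"
        unfolding p'_def q'_def by (metis append_butlast_last_id)+
      have lp': "length p' = Suc m" and "length q' = Suc m"
        using p(1) lq Suc unfolding p'_def q'_def by simp_all
      then have "p' \<noteq> []" "q' \<noteq> []" by auto
      then have bp: "shortest_path V E a (last p') p' \<and> {last p', b} \<in> E \<and>
            dist V E a (last p') + 1 = dist V E a b"
        and bq: "shortest_path V E a (last q') q' \<and> {last q', b} \<in> E \<and>
            dist V E a (last q') + 1 = dist V E a b"
        using shortest_path_butlast[of V E a b p'] shortest_path_butlast[of V E a b q'] p(2) q pb qb
        by simp_all
      then have "last p' = last q'" using u unfolding unique_predecessor_def by blast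
      then have "shortest_path V E a (last p') q'" using bq by simp
      moreover have "length p' = n" using lp' Suc by simp
      ultimately have "p' = q'" using Suc.IH bp by blast
      then show ?thesis using pb qb by simp
    qed
    have "walk V E p" "hd p = a" "last p = b" "enat (length p - 1) = dist V E a b"
      using Suc.prems(2) by (simp_all add: shortest_path_def)
    then have "a \<in> V" "b \<in> V" "dist V E a b \<noteq> \<infinity>"
      using walk_set walk_nonempty by (metis hd_in_set subsetD, metis last_in_set subsetD, metis enat.distinct(2))
    then consider "unique_predecessor V E a b" | "unique_predecessor V E b a" using uniq by blast
    then show ?case
    proof cases
      case 2
      have "rev p = rev q"
        using last_step[OF _ shortest_path_rev shortest_path_rev 2] Suc.prems by simp
      then show ?thesis by simp
    qed (rule last_step[OF Suc.prems])
  qed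
  from this[OF refl] show ?thesis unfolding geodetic_def by blast
qed

lemma exists_nth_switch:
  "p \<noteq> [] \<Longrightarrow> P (hd p) \<Longrightarrow> \<not> P (last p) \<Longrightarrow> \<exists>i. Suc i < length p \<and> P (p ! i) \<and> \<not> P (p ! Suc i)"
proof (induction p rule: induct_list012)
  case (3 x y p)
  show ?case
  proof (cases "P y")
    case True
    then obtain i where "Suc i < length (y # p)" "P ((y # p) ! i)" "\<not> P ((y # p) ! Suc i)"
      using "3.IH"(2) "3.prems" by auto
    then show ?thesis by (intro exI[of _ "Suc i"]) simp
  next
    case False
    then show ?thesis using "3.prems" by (intro exI[of _ 0]) simp
  qed
qed simp_all

text \<open>A shortest \<open>u\<close>--\<open>x\<close> path leaves \<open>A\<close> through some edge \<open>yz\<close>. If \<open>yz \<noteq> wx\<close>, then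
  \<open>d(y,w) \<le> d(z,x) + 2\<close> and the odd parity of \<open>d(y,w) + d(z,x)\<close> force \<open>d(y,w) \<le> d(z,x) + 1\<close>,
  so going to \<open>w\<close> from \<open>y\<close> is no longer than following the path to \<open>x\<close>.\<close>

lemma dist_to_near_end_le:
  assumes AB: "A \<union> B = V" "A \<inter> B = {}"
    and u: "u \<in> A" and wx: "w \<in> A" "x \<in> B" "{w, x} \<in> E"
    and odd: "\<And>y z. y \<in> A \<Longrightarrow> z \<in> B \<Longrightarrow> {y, z} \<in> E \<Longrightarrow> (y, z) \<noteq> (w, x) \<Longrightarrow>
                \<exists>n. dist V E y w + dist V E z x = enat n \<and> odd n"
  shows "dist V E u w \<le> dist V E u x"
proof (cases "dist V E u x = \<infinity>")
  case False
  then obtain p where p: "shortest_path V E u x p" by (rule shortest_path_exists)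
  then have w: "walk V E p" "hd p = u" "last p = x" and L: "dist V E u x = enat (length p - 1)"
    by (simp_all add: shortest_path_def)
  have ne: "p \<noteq> []" using w(1) by (rule walk_nonempty)
  obtain i where i: "Suc i < length p" "p ! i \<in> A" "p ! Suc i \<notin> A"
    using exists_nth_switch[of p "\<lambda>v. v \<in> A"] ne w(2,3) u wx(2) AB(2) by blast
  define y z where "y = p ! i" and "z = p ! Suc i"
  have yz: "{y, z} \<in> E" unfolding y_def z_def using walk_nth_edge[OF w(1) i(1)] .
  have "z \<in> V" unfolding z_def using walk_set[OF w(1)] i(1) by auto
  then have yA: "y \<in> A" and zB: "z \<in> B" using i AB unfolding y_def z_def by auto
  have "dist V E u y \<le> enat i"
  proof -
    have "walk V E (take (Suc i) p)" using walk_take[OF w(1)] i(1) by simp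
    moreover have "last (take (Suc i) p) = y" using i(1) by (simp add: y_def take_Suc_conv_app_nth)
    ultimately show ?thesis using dist_le_walk[of V E "take (Suc i) p" u y] w(2) ne i(1) by simp
  qed
  then obtain a where a: "dist V E u y = enat a" "a \<le> i" by (cases "dist V E u y") auto
  have "dist V E z x \<le> enat (length p - 1 - Suc i)"
  proof -
    have "walk V E (drop (Suc i) p)" using walk_drop[OF w(1)] i(1) by simp
    moreover have "hd (drop (Suc i) p) = z" using i(1) by (simp add: z_def hd_drop_conv_nth)
    ultimately show ?thesis using dist_le_walk[of V E "drop (Suc i) p" z x] w(3) i(1) by simp
  qed
  then obtain b where b: "dist V E z x = enat b" "b \<le> length p - 1 - Suc i"
    by (cases "dist V E z x") auto
  show ?thesis
  proof (cases "(y, z) = (w, x)")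
    case True
    then show ?thesis using a b i(1) L by simp
  next
    case False
    then obtain n where n: "dist V E y w + dist V E z x = enat n" "odd n"
      using odd[OF yA zB yz] by blast
    then obtain c where c: "dist V E y w = enat c" by (cases "dist V E y w") auto
    have "dist V E y w \<le> dist V E y z + (dist V E z x + dist V E x w)"
      using dist_via[of V E y w z] dist_via[of V E z w x] by (meson add_left_mono order_trans)
    also have "\<dots> \<le> 1 + (dist V E z x + 1)"
    proof (intro add_mono order_refl)
      show "dist V E y z \<le> 1" using dist_edge_le_1[OF yz] yA \<open>z \<in> V\<close> AB by auto
      show "dist V E x w \<le> 1" using dist_edge_le_1[of x w E V] wx AB by (auto simp: insert_commute)
    qed
    finally have "c \<le> b + 1" using b c n by (simp add: one_enat_def) presburger
    have "dist V E u w \<le> dist V E u y + dist V E y w" by (rule dist_via)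
    also have "\<dots> \<le> enat (length p - 1)" using a c \<open>c \<le> b + 1\<close> b i(1) by simp
    finally show ?thesis using L by simp
  qed
qed simp

lemma min_le_add_min:
  fixes a b a' b' c :: enat
  shows "a \<le> c + a' \<Longrightarrow> b \<le> c + b' \<Longrightarrow> min a b \<le> c + min a' b'"
  by (simp add: min_def add_left_mono) (meson order_trans add_left_mono nle_le)

lemma enat_Suc_add: "enat (Suc i) + a = 1 + (enat i + a)"
  by (cases a) (simp_all add: one_enat_def)

lemma sum_prod3_cases [case_names Inl Inr]:
  obtains (Inl) x where "s = Inl x" | (Inr) u v i where "s = Inr (u, v, i)"
  by (cases s) auto

locale cut_subdivision =
  fixes V :: "'a set" and E :: "'a set set" and S T :: "'a set" and k :: nat
  assumes simple: "simple_graph V E"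
    and partition: "S \<union> T = V" "S \<inter> T = {}"
    and closed: "geodetically_closed V E S" "geodetically_closed V E T"
begin

abbreviation "V' \<equiv> subdiv_V V E S T k"
abbreviation "E' \<equiv> subdiv_E E S T k"
abbreviation "CP \<equiv> cut_pairs E S T"

lemma edge_vertices: "{a, b} \<in> E \<Longrightarrow> a \<in> V \<and> b \<in> V"
  using simple unfolding simple_graph_def by (metis doubleton_eq_iff)

lemma cut_pairs_iff [simp]: "(u, v) \<in> CP \<longleftrightarrow> u \<in> S \<and> v \<in> T \<and> {u, v} \<in> E"
  by (simp add: cut_pairs_def)

lemma cut_pair_vertices: "(u, v) \<in> CP \<Longrightarrow> u \<in> V \<and> v \<in> V \<and> u \<noteq> v"
  using partition by auto

lemma cut_pair_in_cut_set: "(u, v) \<in> CP \<Longrightarrow> {u, v} \<in> cut_set E S T"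
  unfolding cut_set_def by auto

lemma cut_set_cases: "{a, b} \<in> cut_set E S T \<Longrightarrow> (a, b) \<in> CP \<or> (b, a) \<in> CP"
  unfolding cut_set_def by (auto simp: doubleton_eq_iff insert_commute)

lemma non_cut_edge_same_side:
  assumes "{a, b} \<in> E" "{a, b} \<notin> cut_set E S T"
  shows "a \<in> S \<longleftrightarrow> b \<in> S"
  using assms edge_vertices[OF assms(1)] partition
  unfolding cut_set_def by (auto simp: insert_commute)

lemma Inl_in_V' [simp]: "Inl x \<in> V' \<longleftrightarrow> x \<in> V"
  by (auto simp: subdiv_V_def)

lemma Inr_in_V' [simp]: "Inr (u, v, i) \<in> V' \<longleftrightarrow> (u, v) \<in> CP \<and> 1 \<le> i \<and> i \<le> k"
  by (auto simp: subdiv_V_def)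

lemma sub_node_0 [simp]: "sub_node k u v 0 = Inl u"
  by (simp add: sub_node_def)

lemma sub_node_Suc_k [simp]: "sub_node k u v (Suc k) = Inl v"
  by (simp add: sub_node_def)

lemma sub_node_inner: "1 \<le> i \<Longrightarrow> i \<le> k \<Longrightarrow> sub_node k u v i = Inr (u, v, i)"
  by (simp add: sub_node_def)

lemma sub_node_eq_Inr_iff:
  "sub_node k u v i = Inr (w, x, j) \<longleftrightarrow> i \<noteq> 0 \<and> i \<noteq> Suc k \<and> u = w \<and> v = x \<and> i = j"
  by (auto simp: sub_node_def)

lemma sub_node_eq_Inl_iff:
  "sub_node k u v i = Inl y \<longleftrightarrow> (i = 0 \<and> y = u) \<or> (i \<noteq> 0 \<and> i = Suc k \<and> y = v)"
  by (auto simp: sub_node_def)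

lemma sub_node_in_V': "(u, v) \<in> CP \<Longrightarrow> i \<le> Suc k \<Longrightarrow> sub_node k u v i \<in> V'"
  using cut_pair_vertices by (auto simp: sub_node_def)

lemma sub_node_edge: "(u, v) \<in> CP \<Longrightarrow> i \<le> k \<Longrightarrow> {sub_node k u v i, sub_node k u v (Suc i)} \<in> E'"
  unfolding subdiv_E_def by blast

lemma Inl_edge: "{a, b} \<in> E \<Longrightarrow> {a, b} \<notin> cut_set E S T \<Longrightarrow> {Inl a, Inl b} \<in> E'"
  unfolding subdiv_E_def by blast

lemma subdiv_edge_cases [consumes 1]:
  assumes "{b, c} \<in> E'"
  obtains (original) a a' where "{b, c} = {Inl a, Inl a'}" "{a, a'} \<in> E" "{a, a'} \<notin> cut_set E S T"
  | (subdivided) u v i where "{b, c} = {sub_node k u v i, sub_node k u v (Suc i)}" "(u, v) \<in> CP" "i \<le> k"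
  using assms unfolding subdiv_E_def by blast

lemma subdiv_edge_vertices:
  assumes "{b, c} \<in> E'"
  shows "b \<in> V' \<and> c \<in> V'"
  using assms
proof (cases rule: subdiv_edge_cases)
  case (original a a')
  then show ?thesis using edge_vertices by (auto simp: doubleton_eq_iff)
next
  case (subdivided u v i)
  then show ?thesis using sub_node_in_V' by (auto simp: doubleton_eq_iff)
qed

text \<open>Between original vertices a shortest path crosses the cut at most once (by closedness of
  \<open>S\<close> and \<open>T\<close>), and each crossing costs \<open>k\<close> extra steps in the subdivided graph.\<close>

definition side_cost :: "'a \<Rightarrow> 'a \<Rightarrow> nat" where
  "side_cost x y = (if (x \<in> S) = (y \<in> S) then 0 else k)"

definition odist :: "'a \<Rightarrow> 'a \<Rightarrow> enat" where
  "odist x y = dist V E x y + enat (side_cost x y)"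

lemma odist_same_side: "(x \<in> S) = (y \<in> S) \<Longrightarrow> odist x y = dist V E x y"
  by (simp add: odist_def side_cost_def zero_enat_def[symmetric])

lemma odist_other_side: "(x \<in> S) \<noteq> (y \<in> S) \<Longrightarrow> odist x y = dist V E x y + enat k"
  by (simp add: odist_def side_cost_def)

lemma odist_eq_infinity_iff: "odist x y = \<infinity> \<longleftrightarrow> dist V E x y = \<infinity>"
  by (simp add: odist_def plus_eq_infty_iff_enat)

lemma odist_other_side_ge:
  assumes "(x \<in> S) \<noteq> (y \<in> S)"
  shows "enat (k + 1) \<le> odist x y"
proof -
  have "enat k + 1 \<le> enat k + dist V E x y"
    using assms dist_ge_1[of x y V E] by (intro add_left_mono) auto
  then show ?thesis using assms by (simp add: odist_other_side one_enat_def add.commute)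
qed

lemma odist_refl: "x \<in> V \<Longrightarrow> odist x x = 0"
  by (simp add: odist_same_side dist_refl)

text \<open>The claimed distances in the subdivided graph from a vertex \<open>s\<close>: the \<open>i\<close>-th vertex on the
  path replacing the cut edge \<open>(u, v)\<close> is reached through \<open>u\<close>, through \<open>v\<close>, or, if \<open>s\<close> lies on
  the same path, along it.\<close>

fun dist_orig :: "'a + 'a \<times> 'a \<times> nat \<Rightarrow> 'a \<Rightarrow> enat" where
  "dist_orig (Inl x) y = odist x y"
| "dist_orig (Inr (u0, v0, i0)) y = min (enat i0 + odist u0 y) (enat (k + 1 - i0) + odist v0 y)"

fun dist_along :: "'a + 'a \<times> 'a \<times> nat \<Rightarrow> 'a \<Rightarrow> 'a \<Rightarrow> nat \<Rightarrow> enat" where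
  "dist_along (Inl x) u v i = \<infinity>"
| "dist_along (Inr (u0, v0, i0)) u v i = (if (u0, v0) = (u, v) then enat (i - i0 + (i0 - i)) else \<infinity>)"

definition dist_inner :: "'a + 'a \<times> 'a \<times> nat \<Rightarrow> 'a \<Rightarrow> 'a \<Rightarrow> nat \<Rightarrow> enat" where
  "dist_inner s u v i =
     min (min (enat i + dist_orig s u) (enat (k + 1 - i) + dist_orig s v)) (dist_along s u v i)"

fun sdist :: "'a + 'a \<times> 'a \<times> nat \<Rightarrow> 'a + 'a \<times> 'a \<times> nat \<Rightarrow> enat" where
  "sdist s (Inl y) = dist_orig s y"
| "sdist s (Inr (u, v, i)) = dist_inner s u v i"

lemma odist_non_cut_edge_le:
  assumes "{a, b} \<in> E" "{a, b} \<notin> cut_set E S T"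
  shows "odist x b \<le> 1 + odist x a"
proof -
  have "dist V E x b \<le> dist V E x a + 1"
    using dist_edge[OF assms(1), where x=x] edge_vertices[OF assms(1)] by simp
  moreover have "side_cost x b = side_cost x a"
    using non_cut_edge_same_side[OF assms] by (simp add: side_cost_def)
  ultimately show ?thesis unfolding odist_def
    by (simp add: add_right_mono add.commute add.left_commute)
qed

lemma odist_edge_le:
  assumes "{u, v} \<in> E"
  shows "odist x u \<le> enat (k + 1) + odist x v"
proof -
  have "dist V E x u \<le> dist V E x v + 1"
    using edge_vertices[OF assms] dist_edge[of v u E V x] assms by (simp add: insert_commute)
  moreover have "enat (side_cost x u) \<le> enat (k + side_cost x v)"
    by (simp add: side_cost_def)
  ultimately have "odist x u \<le> (dist V E x v + 1) + enat (k + side_cost x v)"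
    unfolding odist_def by (rule add_mono)
  also have "\<dots> = enat (k + 1) + odist x v"
    unfolding odist_def by (cases "dist V E x v") (simp_all add: one_enat_def)
  finally show ?thesis .
qed

lemma dist_orig_non_cut_edge_le:
  assumes "{a, b} \<in> E" "{a, b} \<notin> cut_set E S T"
  shows "dist_orig s b \<le> 1 + dist_orig s a"
proof (cases s rule: sum_prod3_cases)
  case (Inl x)
  then show ?thesis using odist_non_cut_edge_le[OF assms] by simp
next
  case (Inr u0 v0 i0)
  note s = this
  have "enat i0 + odist u0 b \<le> 1 + (enat i0 + odist u0 a)"
    "enat (k + 1 - i0) + odist v0 b \<le> 1 + (enat (k + 1 - i0) + odist v0 a)"
    using odist_non_cut_edge_le[OF assms] by (metis add.left_commute add_left_mono)+
  then show ?thesis unfolding s dist_orig.simps by (rule min_le_add_min)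
qed

lemma dist_orig_edge_le:
  assumes "{u, v} \<in> E"
  shows "dist_orig s u \<le> enat (k + 1) + dist_orig s v"
proof (cases s rule: sum_prod3_cases)
  case (Inl x)
  then show ?thesis using odist_edge_le[OF assms] by simp
next
  case (Inr u0 v0 i0)
  note s = this
  have "enat i0 + odist u0 u \<le> enat (k + 1) + (enat i0 + odist u0 v)"
    "enat (k + 1 - i0) + odist v0 u \<le> enat (k + 1) + (enat (k + 1 - i0) + odist v0 v)"
    using odist_edge_le[OF assms] by (metis add.left_commute add_left_mono)+
  then show ?thesis unfolding s dist_orig.simps by (rule min_le_add_min)
qed

lemma dist_orig_le_dist_along:
  assumes "s \<in> V'" "(u, v) \<in> CP"
  shows "dist_orig s u \<le> dist_along s u v 0" "dist_orig s v \<le> dist_along s u v (Suc k)"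
proof -
  have "dist_orig s u \<le> dist_along s u v 0 \<and> dist_orig s v \<le> dist_along s u v (Suc k)"
  proof (cases "\<exists>i0. s = Inr (u, v, i0)")
    case True
    then obtain i0 where s: "s = Inr (u, v, i0)" by blast
    then have "i0 \<le> k" using assms(1) by simp
    then show ?thesis
      using s cut_pair_vertices[OF assms(2)] odist_refl
      by (simp add: min.coboundedI1 min.coboundedI2)
  next
    case False
    then have "dist_along s u v i = \<infinity>" for i by (cases s rule: sum_prod3_cases) auto
    then show ?thesis by simp
  qed
  then show "dist_orig s u \<le> dist_along s u v 0" "dist_orig s v \<le> dist_along s u v (Suc k)"
    by auto
qed

lemma sdist_sub_node:
  assumes s: "s \<in> V'" and uv: "(u, v) \<in> CP" and i: "i \<le> Suc k"
  shows "sdist s (sub_node k u v i) = dist_inner s u v i"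
proof -
  have "{u, v} \<in> E" "{v, u} \<in> E" using uv by (auto simp: insert_commute)
  then have "dist_orig s u \<le> enat (k + 1) + dist_orig s v" "dist_orig s v \<le> enat (k + 1) + dist_orig s u"
    by (simp_all only: dist_orig_edge_le)
  then show ?thesis
    using i dist_orig_le_dist_along[OF s uv]
    by (auto simp: sub_node_def dist_inner_def min_def zero_enat_def[symmetric])
qed

lemma dist_along_Suc_le:
  "dist_along s u v (Suc i) \<le> 1 + dist_along s u v i \<and> dist_along s u v i \<le> 1 + dist_along s u v (Suc i)"
  by (cases s rule: sum_prod3_cases) (auto simp: one_enat_def)

lemma dist_inner_Suc_le:
  assumes "i \<le> k"
  shows "dist_inner s u v (Suc i) \<le> 1 + dist_inner s u v i \<and> dist_inner s u v i \<le> 1 + dist_inner s u v (Suc i)"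
proof -
  have k: "k + 1 - i = Suc (k + 1 - Suc i)" using assms by simp
  have "enat (Suc i) + dist_orig s u \<le> 1 + (enat i + dist_orig s u)"
    "enat i + dist_orig s u \<le> 1 + (enat (Suc i) + dist_orig s u)"
    "enat (k + 1 - Suc i) + dist_orig s v \<le> 1 + (enat (k + 1 - i) + dist_orig s v)"
    "enat (k + 1 - i) + dist_orig s v \<le> 1 + (enat (k + 1 - Suc i) + dist_orig s v)"
    unfolding k by (simp_all add: enat_Suc_add)
  then show ?thesis unfolding dist_inner_def
    using min_le_add_min[OF min_le_add_min] dist_along_Suc_le by blast
qed

lemma sdist_edge_le:
  assumes s: "s \<in> V'" and e: "{b, c} \<in> E'"
  shows "sdist s c \<le> sdist s b + 1"
  using e
proof (cases rule: subdiv_edge_cases)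
  case (original a a')
  then have "dist_orig s a \<le> 1 + dist_orig s a'" "dist_orig s a' \<le> 1 + dist_orig s a"
    using dist_orig_non_cut_edge_le by (metis insert_commute)+
  then show ?thesis using original(1) by (auto simp: doubleton_eq_iff add.commute)
next
  case (subdivided u v i)
  then have "sdist s (sub_node k u v i) = dist_inner s u v i"
    "sdist s (sub_node k u v (Suc i)) = dist_inner s u v (Suc i)"
    using sdist_sub_node[OF s] by simp_all
  then show ?thesis
    using subdivided(1) dist_inner_Suc_le[OF subdivided(3), of s u v]
    by (auto simp: doubleton_eq_iff add.commute)
qed

lemma sdist_self: "s \<in> V' \<Longrightarrow> sdist s s = 0"
proof (cases s rule: sum_prod3_cases)
  case (Inr u v i)
  then have "sdist s s \<le> dist_along s u v i" by (simp add: dist_inner_def)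
  then show ?thesis using Inr by (simp add: zero_enat_def[symmetric])
qed (simp add: odist_refl)

lemma dist_inner_descent:
  assumes j: "1 \<le> j" "j \<le> k" and ne: "s \<noteq> Inr (w, x, j)"
  shows "dist_inner s w x (j - 1) + 1 \<le> dist_inner s w x j \<or>
         dist_inner s w x (Suc j) + 1 \<le> dist_inner s w x j"
proof -
  obtain j' where j': "j = Suc j'" using j(1) by (cases j) auto
  have k: "k + 1 - j = Suc (k + 1 - Suc j)" using j(2) by simp
  have "dist_inner s w x j' + 1 \<le> enat j' + dist_orig s w + 1"
    by (simp add: dist_inner_def add_right_mono min.coboundedI1)
  then have via_w: "dist_inner s w x (j - 1) + 1 \<le> enat j + dist_orig s w"
    by (simp add: j' enat_Suc_add ac_simps)
  have "dist_inner s w x (Suc j) + 1 \<le> enat (k + 1 - Suc j) + dist_orig s x + 1"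
    by (simp add: dist_inner_def add_right_mono min.coboundedI1)
  then have via_x: "dist_inner s w x (Suc j) + 1 \<le> enat (k + 1 - j) + dist_orig s x"
    unfolding k enat_Suc_add by (simp add: ac_simps)
  have along: "dist_inner s w x (j - 1) + 1 \<le> dist_along s w x j \<or>
      dist_inner s w x (Suc j) + 1 \<le> dist_along s w x j"
  proof (cases "\<exists>i0. s = Inr (w, x, i0)")
    case True
    then obtain i0 where s: "s = Inr (w, x, i0)" by blast
    have "dist_inner s w x i \<le> enat (i - i0 + (i0 - i))" for i
      by (simp add: dist_inner_def s)
    then have prev: "dist_inner s w x (j - 1) + 1 \<le> enat (Suc (j - 1 - i0 + (i0 - (j - 1))))"
      and succ: "dist_inner s w x (Suc j) + 1 \<le> enat (Suc (Suc j - i0 + (i0 - Suc j)))"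
      by (metis add_right_mono eSuc_enat eSuc_plus_1)+
    have "i0 \<noteq> j" using ne s by auto
    show ?thesis
    proof (cases "i0 < j")
      case True
      then have "Suc (j - 1 - i0 + (i0 - (j - 1))) = j - i0 + (i0 - j)" by simp
      then show ?thesis using prev s by (simp only: dist_along.simps) simp
    next
      case False
      then have "Suc (Suc j - i0 + (i0 - Suc j)) = j - i0 + (i0 - j)" using \<open>i0 \<noteq> j\<close> by simp
      then show ?thesis using succ s by (simp only: dist_along.simps) simp
    qed
  next
    case False
    then have "dist_along s w x j = \<infinity>" by (cases s rule: sum_prod3_cases) auto
    then show ?thesis by simp
  qed
  have "dist_inner s w x j = enat j + dist_orig s w \<or>
      dist_inner s w x j = enat (k + 1 - j) + dist_orig s x \<or> dist_inner s w x j = dist_along s w x j"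
    by (simp add: dist_inner_def min_def)
  then show ?thesis using via_w via_x along by auto
qed

lemma exists_descent_inner:
  assumes s: "s \<in> V'" and b: "Inr (w, x, j) \<in> V'" "s \<noteq> Inr (w, x, j)"
  shows "\<exists>c\<in>V'. {Inr (w, x, j), c} \<in> E' \<and> sdist s c + 1 \<le> sdist s (Inr (w, x, j))"
proof -
  have wx: "(w, x) \<in> CP" and j: "1 \<le> j" "j \<le> k" using b(1) by auto
  have self: "sub_node k w x j = Inr (w, x, j)" using j by (simp add: sub_node_inner)
  obtain i where i: "i = j - 1 \<or> i = Suc j" "dist_inner s w x i + 1 \<le> dist_inner s w x j"
    using dist_inner_descent[OF j b(2)] by blast
  have "i \<le> Suc k" "sdist s (sub_node k w x i) = dist_inner s w x i"
    using i(1) j sdist_sub_node[OF s wx] by auto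
  moreover have "{Inr (w, x, j), sub_node k w x i} \<in> E'"
    using i(1) j sub_node_edge[OF wx, of "j - 1"] sub_node_edge[OF wx, of j] self
    by (auto simp: insert_commute)
  ultimately show ?thesis using i(2) sub_node_in_V'[OF wx] by force
qed

lemma sdist_le_via_orig:
  assumes le: "\<And>y. dist_orig s y \<le> d + odist z y"
  shows "sdist s c \<le> d + sdist (Inl z) c"
proof (cases c rule: sum_prod3_cases)
  case (Inr u v i)
  have "enat j + dist_orig s y \<le> d + (enat j + odist z y)" for j y
    using le[of y] by (metis add.left_commute add_left_mono)
  then have "min (enat i + dist_orig s u) (enat (k + 1 - i) + dist_orig s v)
      \<le> d + min (enat i + odist z u) (enat (k + 1 - i) + odist z v)"
    by (intro min_le_add_min)
  then show ?thesis using Inr by (simp add: dist_inner_def min.coboundedI1)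
qed (simp add: le)

lemma sdist_Inr_le:
  "sdist (Inr (u0, v0, i0)) c \<le> enat i0 + sdist (Inl u0) c"
  "sdist (Inr (u0, v0, i0)) c \<le> enat (k + 1 - i0) + sdist (Inl v0) c"
  by (rule sdist_le_via_orig; simp)+

lemma exists_descent_orig:
  assumes x: "x \<in> V" and y: "y \<in> V" "y \<noteq> x" and fin: "odist x y \<noteq> \<infinity>"
  shows "\<exists>c\<in>V'. {Inl y, c} \<in> E' \<and> sdist (Inl x) c + 1 \<le> odist x y"
proof -
  have "dist V E x y \<noteq> \<infinity>" using fin by (simp add: odist_eq_infinity_iff)
  then obtain p z where p: "shortest_path V E x y p" and zp: "z \<in> set p"
    and zy: "{z, y} \<in> E" and dz: "dist V E x z + 1 = dist V E x y"
    using predecessor_exists y(2) by metis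
  have z: "z \<in> V" using edge_vertices[OF zy] by simp
  show ?thesis
  proof (cases "{z, y} \<in> cut_set E S T")
    case False
    then have "{Inl y, Inl z} \<in> E'" using zy Inl_edge[of y z] by (simp add: insert_commute)
    moreover have "side_cost x z = side_cost x y"
      using non_cut_edge_same_side[OF zy False] by (simp add: side_cost_def)
    then have "odist x z + 1 = odist x y" using dz by (simp add: odist_def ac_simps)
    ultimately show ?thesis using z by force
  next
    case True
    have zy_side: "z \<in> S \<longleftrightarrow> y \<notin> S" using cut_set_cases[OF True] partition by auto
    have xz_side: "x \<in> S \<longleftrightarrow> z \<in> S"
    proof -
      have "x \<in> S \<Longrightarrow> y \<in> S \<Longrightarrow> z \<in> S" "x \<in> T \<Longrightarrow> y \<in> T \<Longrightarrow> z \<in> T"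
        using closed p zp unfolding geodetically_closed_def by blast+
      then show ?thesis using zy_side partition x y z by blast
    qed
    have odist: "odist x y = enat k + dist V E x z + 1" "odist x z = dist V E x z"
      using odist_other_side[of x y] odist_same_side[of x z] xz_side zy_side dz
      by (simp_all add: ac_simps)
    from cut_set_cases[OF True] show ?thesis
    proof
      assume zy': "(z, y) \<in> CP"
      have "{Inl y, sub_node k z y k} \<in> E'"
        using sub_node_edge[OF zy', of k] by (simp add: insert_commute)
      moreover have "sdist (Inl x) (sub_node k z y k) \<le> enat k + odist x z"
        using sdist_sub_node[OF _ zy'] x by (simp add: dist_inner_def min.coboundedI1)
      then have "sdist (Inl x) (sub_node k z y k) + 1 \<le> odist x y"
        using add_right_mono odist by metis
      ultimately show ?thesis using sub_node_in_V'[OF zy', of k] by auto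
    next
      assume yz': "(y, z) \<in> CP"
      have "{Inl y, sub_node k y z 1} \<in> E'" using sub_node_edge[OF yz', of 0] by simp
      moreover have "sdist (Inl x) (sub_node k y z 1) \<le> enat k + odist x z"
        using sdist_sub_node[OF _ yz'] x by (simp add: dist_inner_def min.coboundedI1 min.coboundedI2)
      then have "sdist (Inl x) (sub_node k y z 1) + 1 \<le> odist x y"
        using add_right_mono odist by metis
      ultimately show ?thesis using sub_node_in_V'[OF yz', of 1] by auto
    qed
  qed
qed

lemma exists_descent_orig_from_inner:
  assumes s: "Inr (u0, v0, i0) \<in> V'" and y: "y \<in> V"
    and fin: "dist_orig (Inr (u0, v0, i0)) y \<noteq> \<infinity>"
  shows "\<exists>c\<in>V'. {Inl y, c} \<in> E' \<and>
    sdist (Inr (u0, v0, i0)) c + 1 \<le> dist_orig (Inr (u0, v0, i0)) y"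
proof -
  let ?s = "Inr (u0, v0, i0)"
  have uv: "(u0, v0) \<in> CP" and i0: "1 \<le> i0" "i0 \<le> k" using s by auto
  have uv_V: "u0 \<in> V" "v0 \<in> V" using cut_pair_vertices[OF uv] by auto
  let ?A = "enat i0 + odist u0 y" and ?B = "enat (k + 1 - i0) + odist v0 y"
  show ?thesis
  proof (cases "?A \<le> ?B")
    case True
    then have d: "dist_orig ?s y = ?A" by simp
    show ?thesis
    proof (cases "y = u0")
      case True
      have "sdist ?s (sub_node k u0 v0 1) \<le> enat (i0 - 1)"
        using sdist_sub_node[OF s uv, of 1] i0 by (simp add: dist_inner_def)
      then have "sdist ?s (sub_node k u0 v0 1) + 1 \<le> ?A"
        using i0 True odist_refl[OF uv_V(1)] by (metis add.right_neutral add_right_mono eSuc_enat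
            eSuc_plus_1 Suc_diff_1 less_le_trans zero_less_one)
      moreover have "{Inl y, sub_node k u0 v0 1} \<in> E'" using True sub_node_edge[OF uv, of 0] by simp
      ultimately show ?thesis using d sub_node_in_V'[OF uv, of 1] by auto
    next
      case False
      have "odist u0 y \<noteq> \<infinity>" using fin d by (metis plus_eq_infty_iff_enat)
      then obtain c where c: "c \<in> V'" "{Inl y, c} \<in> E'" "sdist (Inl u0) c + 1 \<le> odist u0 y"
        using exists_descent_orig[OF uv_V(1) y False] by blast
      have "sdist ?s c + 1 \<le> enat i0 + sdist (Inl u0) c + 1"
        using sdist_Inr_le(1) by (rule add_right_mono)
      also have "\<dots> \<le> ?A" using c(3) by (metis add.assoc add_left_mono)
      finally show ?thesis using c d by auto
    qed
  next
    case False
    then have d: "dist_orig ?s y = ?B" by simp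
    show ?thesis
    proof (cases "y = v0")
      case True
      have "sdist ?s (sub_node k u0 v0 k) \<le> enat (k - i0)"
        using sdist_sub_node[OF s uv, of k] i0 by (simp add: dist_inner_def)
      then have "sdist ?s (sub_node k u0 v0 k) + 1 \<le> ?B"
        using i0 True odist_refl[OF uv_V(2)]
        by (metis Suc_diff_le Suc_eq_plus1 add.right_neutral add_right_mono eSuc_enat eSuc_plus_1)
      moreover have "{Inl y, sub_node k u0 v0 k} \<in> E'"
        using True sub_node_edge[OF uv, of k] by (simp add: insert_commute)
      ultimately show ?thesis using d sub_node_in_V'[OF uv, of k] by auto
    next
      case False
      have "odist v0 y \<noteq> \<infinity>" using fin d by (metis plus_eq_infty_iff_enat)
      then obtain c where c: "c \<in> V'" "{Inl y, c} \<in> E'" "sdist (Inl v0) c + 1 \<le> odist v0 y"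
        using exists_descent_orig[OF uv_V(2) y False] by blast
      have "sdist ?s c + 1 \<le> enat (k + 1 - i0) + sdist (Inl v0) c + 1"
        using sdist_Inr_le(2) by (rule add_right_mono)
      also have "\<dots> \<le> ?B" using c(3) by (metis add.assoc add_left_mono)
      finally show ?thesis using c d by auto
    qed
  qed
qed

theorem dist_subdivision:
  assumes s: "s \<in> V'" and t: "t \<in> V'"
  shows "dist V' E' s t = sdist s t"
proof (rule dist_eq_potential[where F = "sdist s"])
  show "s \<in> V'" "sdist s s = 0" "t \<in> V'" using s t sdist_self by simp_all
  show "sdist s c \<le> sdist s b + 1" if "{b, c} \<in> E'" for b c
    using sdist_edge_le[OF s that] .
  show "\<exists>c\<in>V'. {b, c} \<in> E' \<and> sdist s c + 1 \<le> sdist s b"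
    if b: "b \<in> V'" "b \<noteq> s" "sdist s b \<noteq> \<infinity>" for b
  proof (cases b rule: sum_prod3_cases)
    case (Inl y)
    show ?thesis
    proof (cases s rule: sum_prod3_cases)
      case (Inl x)
      then show ?thesis using exists_descent_orig[of x y] s b \<open>b = Inl y\<close> by auto
    next
      case (Inr u0 v0 i0)
      then show ?thesis using exists_descent_orig_from_inner[of u0 v0 i0 y] s b \<open>b = Inl y\<close> by auto
    qed
  next
    case (Inr w x j)
    then show ?thesis using exists_descent_inner[OF s, of w x j] b by auto
  qed
qed

lemma neighbour_Inr:
  assumes "{c, Inr (w, x, j)} \<in> E'"
  shows "c = sub_node k w x (j - 1) \<or> c = sub_node k w x (Suc j)"
  using assms
proof (cases rule: subdiv_edge_cases)
  case (subdivided u v i)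
  then consider "c = sub_node k u v i" "sub_node k u v (Suc i) = Inr (w, x, j)"
    | "c = sub_node k u v (Suc i)" "sub_node k u v i = Inr (w, x, j)"
    by (auto simp: doubleton_eq_iff)
  then show ?thesis by cases (auto simp: sub_node_eq_Inr_iff)
qed (auto simp: doubleton_eq_iff)

definition step_toward :: "'a \<Rightarrow> 'a \<Rightarrow> 'a + 'a \<times> 'a \<times> nat" where
  "step_toward y g = (if {y, g} \<in> cut_set E S T
     then (if y \<in> S then sub_node k y g 1 else sub_node k g y k) else Inl g)"

lemma neighbour_Inl:
  assumes "{c, Inl y} \<in> E'"
  shows "\<exists>g. {y, g} \<in> E \<and> c = step_toward y g"
  using assms
proof (cases rule: subdiv_edge_cases)
  case (original a a')
  then show ?thesis by (auto simp: doubleton_eq_iff step_toward_def insert_commute)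
next
  case (subdivided u v i)
  then consider "c = sub_node k u v i" "sub_node k u v (Suc i) = Inl y"
    | "c = sub_node k u v (Suc i)" "sub_node k u v i = Inl y"
    by (auto simp: doubleton_eq_iff)
  then show ?thesis
  proof cases
    case 1
    then have "i = k" "y = v" by (auto simp: sub_node_eq_Inl_iff)
    then show ?thesis using 1 subdivided(2) cut_pair_in_cut_set[OF subdivided(2)] partition
      by (auto simp: step_toward_def insert_commute intro!: exI[of _ u])
  next
    case 2
    then have "i = 0" "y = u" using subdivided(3) by (auto simp: sub_node_eq_Inl_iff)
    then show ?thesis using 2 subdivided(2) cut_pair_in_cut_set[OF subdivided(2)]
      by (auto simp: step_toward_def intro!: exI[of _ v])
  qed
qed

lemma sdist_step_toward_cut:
  assumes "x \<in> V" "{y, g} \<in> cut_set E S T"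
  shows "sdist (Inl x) (step_toward y g) = min (1 + odist x y) (enat k + odist x g)"
  using cut_set_cases[OF assms(2)]
proof
  assume yg: "(y, g) \<in> CP"
  then show ?thesis using assms sdist_sub_node[OF _ yg, of "Inl x" 1]
    by (simp add: step_toward_def dist_inner_def one_enat_def)
next
  assume gy: "(g, y) \<in> CP"
  then have "y \<notin> S" using partition by auto
  then show ?thesis using assms sdist_sub_node[OF _ gy, of "Inl x" k]
    by (simp add: step_toward_def dist_inner_def one_enat_def min.commute)
qed

lemma step_toward_predecessor:
  assumes x: "x \<in> V" and yg: "{y, g} \<in> E"
    and d: "sdist (Inl x) (step_toward y g) + 1 = odist x y" and fin: "odist x y \<noteq> \<infinity>"
  shows "dist V E x g + 1 = dist V E x y"
proof -
  obtain dy where dy: "dist V E x y = enat dy"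
    using fin by (cases "dist V E x y") (auto simp: odist_eq_infinity_iff)
  have le: "dist V E x y \<le> dist V E x g + 1"
    using dist_edge[of g y E V x] yg edge_vertices[OF yg] by (simp add: insert_commute)
  show ?thesis
  proof (cases "{y, g} \<in> cut_set E S T")
    case False
    then have "odist x g + 1 = odist x y" using d by (simp add: step_toward_def)
    moreover have "side_cost x g = side_cost x y"
      using non_cut_edge_same_side[OF yg False] by (simp add: side_cost_def)
    ultimately show ?thesis using dy
      by (cases "dist V E x g") (simp_all add: odist_def one_enat_def)
  next
    case True
    have sides: "(y \<in> S) \<noteq> (g \<in> S)" using cut_set_cases[OF True] partition by auto
    have c: "min (1 + odist x y) (enat k + odist x g) + 1 = odist x y"
      using d sdist_step_toward_cut[OF x True] by simp
    have "dist V E x g \<noteq> \<infinity>"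
    proof
      assume "dist V E x g = \<infinity>"
      then have "odist x g = \<infinity>" by (simp add: odist_eq_infinity_iff)
      then have "min (1 + odist x y) (enat k + odist x g) = 1 + odist x y" by simp
      then have "1 + odist x y + 1 = odist x y" using c by simp
      then show False using fin by (cases "odist x y") (simp_all add: one_enat_def)
    qed
    then obtain dg where dg: "dist V E x g = enat dg" by auto
    then show ?thesis
      using c dy le sides odist_same_side[of x y] odist_other_side[of x y]
        odist_same_side[of x g] odist_other_side[of x g]
      by (cases "x \<in> S"; cases "y \<in> S") (auto simp: min_def one_enat_def split: if_splits)
  qed
qed

lemma dist_inner_own:
  assumes s: "Inr (w, x, i0) \<in> V'" and i: "i \<le> Suc k"
  shows "dist_inner (Inr (w, x, i0)) w x i = enat (i - i0 + (i0 - i))"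
proof -
  let ?s = "Inr (w, x, i0)"
  have wx: "(w, x) \<in> CP" and i0: "1 \<le> i0" "i0 \<le> k" using s by auto
  have V: "w \<in> V" "x \<in> V" "w \<noteq> x" "(w \<in> S) \<noteq> (x \<in> S)" using cut_pair_vertices[OF wx] partition wx by auto
  have far: "enat (k + 1) \<le> odist x w" "enat (k + 1) \<le> odist w x"
    using V(4) odist_other_side_ge by metis+
  have w_far: "enat i0 \<le> dist_orig ?s w"
  proof -
    have "enat i0 \<le> enat (k + 1 - i0) + enat (k + 1)" using i0 by simp
    also have "\<dots> \<le> enat (k + 1 - i0) + odist x w" using far(1) by (rule add_left_mono)
    finally show ?thesis using V(1) by (simp add: odist_refl)
  qed
  have "enat (i - i0 + (i0 - i)) \<le> enat i + enat i0" by simp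
  also have "\<dots> \<le> enat i + dist_orig ?s w" using w_far by (rule add_left_mono)
  finally have a: "enat (i - i0 + (i0 - i)) \<le> enat i + dist_orig ?s w" .
  have "enat (k + 1 - i0) \<le> dist_orig ?s x"
  proof -
    have "enat (k + 1 - i0) \<le> enat i0 + enat (k + 1)" by simp
    also have "\<dots> \<le> enat i0 + odist w x" using far(2) by (rule add_left_mono)
    finally show ?thesis using V(2) by (simp add: odist_refl)
  qed
  then have "enat (k + 1 - i) + enat (k + 1 - i0) \<le> enat (k + 1 - i) + dist_orig ?s x"
    by (rule add_left_mono)
  moreover have "i - i0 + (i0 - i) \<le> (k + 1 - i) + (k + 1 - i0)" using i i0 by linarith
  ultimately have b: "enat (i - i0 + (i0 - i)) \<le> enat (k + 1 - i) + dist_orig ?s x"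
    by (metis order_trans enat_ord_simps(1) plus_enat_simps(1))
  show ?thesis using a b by (simp add: dist_inner_def min_def)
qed

end

locale odd_cut_subdivision = cut_subdivision +
  assumes geodetic: "geodetic V E"
    and odd_cut: "\<And>u v w x. u \<in> S \<Longrightarrow> w \<in> S \<Longrightarrow> v \<in> T \<Longrightarrow> x \<in> T \<Longrightarrow>
      {u, v} \<in> E \<Longrightarrow> {w, x} \<in> E \<Longrightarrow> {u, v} \<noteq> {w, x} \<Longrightarrow>
      \<exists>n. dist V E u w + dist V E v x = enat n \<and> odd n"
begin

lemma dist_near_end_S:
  assumes "y \<in> S" "(w, x) \<in> CP"
  shows "dist V E y w \<le> dist V E y x"
proof (rule dist_to_near_end_le[OF partition])
  fix a b assume "a \<in> S" "b \<in> T" "{a, b} \<in> E" "(a, b) \<noteq> (w, x)"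
  moreover then have "{a, b} \<noteq> {w, x}" using assms(2) partition by (auto simp: doubleton_eq_iff)
  ultimately show "\<exists>n. dist V E a w + dist V E b x = enat n \<and> odd n"
    using odd_cut assms(2) by simp
qed (use assms in auto)

lemma dist_near_end_T:
  assumes "y \<in> T" "(w, x) \<in> CP"
  shows "dist V E y x \<le> dist V E y w"
proof (rule dist_to_near_end_le[of T S])
  fix a b assume "a \<in> T" "b \<in> S" "{a, b} \<in> E" "(a, b) \<noteq> (x, w)"
  moreover then have "{b, a} \<noteq> {w, x}" using assms(2) partition by (auto simp: doubleton_eq_iff)
  ultimately show "\<exists>n. dist V E a x + dist V E b w = enat n \<and> odd n"
    using odd_cut[of b w a x] assms(2) by (auto simp: insert_commute add.commute)
qed (use assms partition in \<open>auto simp: insert_commute\<close>)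

lemma dist_orig_Inr:
  assumes s: "Inr (u0, v0, i0) \<in> V'"
  shows "y \<in> S \<Longrightarrow> dist_orig (Inr (u0, v0, i0)) y = enat i0 + dist V E u0 y"
    and "y \<in> T \<Longrightarrow> dist_orig (Inr (u0, v0, i0)) y = enat (k + 1 - i0) + dist V E v0 y"
proof -
  have uv: "(u0, v0) \<in> CP" and i0: "1 \<le> i0" "i0 \<le> k" using s by auto
  then have sides: "u0 \<in> S" "v0 \<in> T" "u0 \<notin> T" "v0 \<notin> S" using partition by auto
  show "dist_orig (Inr (u0, v0, i0)) y = enat i0 + dist V E u0 y" if y: "y \<in> S"
  proof -
    have "dist V E u0 y \<le> dist V E v0 y" using dist_near_end_S[OF y uv] by (simp add: dist_sym)
    then have "enat i0 + dist V E u0 y \<le> enat (k + 1 - i0 + k) + dist V E v0 y"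
      using i0 by (intro add_mono) auto
    also have "\<dots> = enat (k + 1 - i0) + (dist V E v0 y + enat k)"
      by (cases "dist V E v0 y") simp_all
    finally show ?thesis using y sides by (simp add: odist_same_side odist_other_side min_def)
  qed
  show "dist_orig (Inr (u0, v0, i0)) y = enat (k + 1 - i0) + dist V E v0 y" if y: "y \<in> T"
  proof -
    have "dist V E v0 y \<le> dist V E u0 y" using dist_near_end_T[OF y uv] by (simp add: dist_sym)
    then have "enat (k + 1 - i0) + dist V E v0 y \<le> enat (i0 + k) + dist V E u0 y"
      using i0 by (intro add_mono) auto
    also have "\<dots> = enat i0 + (dist V E u0 y + enat k)"
      by (cases "dist V E u0 y") simp_all
    finally have "enat (k + 1 - i0) + dist V E v0 y \<le> enat i0 + (dist V E u0 y + enat k)" .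
    moreover have "y \<notin> S" using y partition by auto
    then have "odist v0 y = dist V E v0 y" "odist u0 y = dist V E u0 y + enat k"
      using sides by (simp_all add: odist_same_side odist_other_side)
    ultimately show ?thesis by (simp add: min_def)
  qed
qed

text \<open>For \<open>s\<close> inner on
  another path this is where the parity of \<open>d(u\<^sub>0, w) + d(v\<^sub>0, x)\<close> enters.\<close>

lemma dist_orig_no_tie:
  assumes s: "s \<in> V'" and wx: "(w, x) \<in> CP" and off: "\<And>i. s \<noteq> Inr (w, x, i)"
    and j: "1 \<le> j" "j \<le> k" and fin: "dist_orig s w \<noteq> \<infinity>"
  shows "enat j + dist_orig s w \<noteq> enat (k + 1 - j) + dist_orig s x"
proof
  assume eq: "enat j + dist_orig s w = enat (k + 1 - j) + dist_orig s x"
  have w: "w \<in> S" "w \<notin> T" and x: "x \<in> T" "x \<notin> S" and wx_E: "{w, x} \<in> E"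
    using wx partition by auto
  show False
  proof (cases s rule: sum_prod3_cases)
    case (Inl y)
    then have y: "y \<in> V" using s by simp
    obtain a b where a: "dist V E y w = enat a" and b: "dist V E y x = enat b"
      using fin eq Inl by (cases "dist V E y w"; cases "dist V E y x")
        (auto simp: odist_def plus_eq_infty_iff_enat)
    show False
    proof (cases "y \<in> S")
      case True
      then have "a \<le> b" using dist_near_end_S[OF True wx] a b by simp
      moreover have "j + a = (k + 1 - j) + (b + k)"
        using eq Inl a b True w x by (simp add: odist_same_side odist_other_side)
      ultimately show False using j by simp
    next
      case False
      then have "y \<in> T" using y partition by auto
      then have "b \<le> a" using dist_near_end_T[OF _ wx, of y] a b by simp
      moreover have "j + (a + k) = (k + 1 - j) + b"
        using eq Inl a b False w x by (simp add: odist_same_side odist_other_side)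
      ultimately show False using j by simp
    qed
  next
    case (Inr u0 v0 i0)
    then have uv: "(u0, v0) \<in> CP" and i0: "1 \<le> i0" "i0 \<le> k" using s by auto
    then have "{u0, v0} \<noteq> {w, x}" using off Inr w x by (auto simp: doubleton_eq_iff)
    then obtain n where n: "dist V E u0 w + dist V E v0 x = enat n" "odd n"
      using odd_cut[of u0 w v0 x] uv wx by auto
    have "dist_orig s w = enat i0 + dist V E u0 w" "dist_orig s x = enat (k + 1 - i0) + dist V E v0 x"
      using dist_orig_Inr[of u0 v0 i0] s Inr w x by simp_all
    moreover obtain a b where "dist V E u0 w = enat a" "dist V E v0 x = enat b"
      using n(1) by (cases "dist V E u0 w"; cases "dist V E v0 x") auto
    ultimately have "j + (i0 + a) = (k + 1 - j) + ((k + 1 - i0) + b)" "a + b = n"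
      using eq n(1) by simp_all
    then show False using n(2) j i0 by presburger
  qed
qed

lemma not_both_neighbours_closer:
  assumes s: "s \<in> V'" and b: "Inr (w, x, j) \<in> V'"
    and prev: "sdist s (sub_node k w x (j - 1)) + 1 = sdist s (Inr (w, x, j))"
    and succ: "sdist s (sub_node k w x (Suc j)) + 1 = sdist s (Inr (w, x, j))"
    and fin: "sdist s (Inr (w, x, j)) \<noteq> \<infinity>"
  shows False
proof -
  have wx: "(w, x) \<in> CP" and j: "1 \<le> j" "j \<le> k" using b by auto
  have prev': "dist_inner s w x (j - 1) + 1 = dist_inner s w x j"
    and succ': "dist_inner s w x (Suc j) + 1 = dist_inner s w x j"
    using prev succ sdist_sub_node[OF s wx] j by simp_all
  show False
  proof (cases "\<exists>i0. s = Inr (w, x, i0)")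
    case True
    then obtain i0 where "s = Inr (w, x, i0)" by blast
    then have "j - 1 - i0 + (i0 - (j - 1)) + 1 = j - i0 + (i0 - j)"
      "Suc j - i0 + (i0 - Suc j) + 1 = j - i0 + (i0 - j)"
      using prev' succ' dist_inner_own s j by (simp_all add: one_enat_def)
    then show False by arith
  next
    case False
    then have "dist_along s w x i = \<infinity>" for i by (cases s rule: sum_prod3_cases) auto
    then have d: "dist_inner s w x i = min (enat i + dist_orig s w) (enat (k + 1 - i) + dist_orig s x)"
      for i by (simp add: dist_inner_def)
    show False
    proof (cases "dist_orig s w")
      case (enat a)
      show False
      proof (cases "dist_orig s x")
        case (enat b)
        have "min (j - 1 + a) (k + 1 - (j - 1) + b) + 1 = min (j + a) (k + 1 - j + b)"
          "min (Suc j + a) (k + 1 - Suc j + b) + 1 = min (j + a) (k + 1 - j + b)"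
          using prev' succ' d \<open>dist_orig s w = enat a\<close> enat by (simp_all add: one_enat_def)
        then have "j + a = k + 1 - j + b" using j by (simp add: min_def split: if_splits)
        then show False using dist_orig_no_tie[OF s wx _ j] False \<open>dist_orig s w = enat a\<close> enat
          by simp
      next
        case infinity
        then have "Suc j + a + 1 = j + a"
          using succ' d \<open>dist_orig s w = enat a\<close> by (simp add: one_enat_def)
        then show False by simp
      qed
    next
      case infinity
      have "dist_inner s w x j \<noteq> \<infinity>" using fin by simp
      then obtain b where "dist_orig s x = enat b" using d infinity
        by (cases "dist_orig s x") auto
      then have "k + 1 - (j - 1) + b + 1 = k + 1 - j + b"
        using prev' d infinity j by (simp add: one_enat_def)
      then show False using j by simp
    qed
  qed
qed

lemma unique_predecessor_Inr:
  assumes s: "s \<in> V'" and b: "Inr (w, x, j) \<in> V'" and fin: "dist V' E' s (Inr (w, x, j)) \<noteq> \<infinity>"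
  shows "unique_predecessor V' E' s (Inr (w, x, j))"
  unfolding unique_predecessor_def
proof (intro allI impI)
  fix c1 c2
  assume e: "{c1, Inr (w, x, j)} \<in> E'" "{c2, Inr (w, x, j)} \<in> E'"
    and d: "dist V' E' s c1 + 1 = dist V' E' s (Inr (w, x, j))"
      "dist V' E' s c2 + 1 = dist V' E' s (Inr (w, x, j))"
  have "c1 \<in> V'" "c2 \<in> V'" using subdiv_edge_vertices[OF e(1)] subdiv_edge_vertices[OF e(2)] by simp_all
  then have d1: "sdist s c1 + 1 = sdist s (Inr (w, x, j))"
    and d2: "sdist s c2 + 1 = sdist s (Inr (w, x, j))"
    and fin': "sdist s (Inr (w, x, j)) \<noteq> \<infinity>"
    using d fin dist_subdivision[OF s] b by simp_all
  show "c1 = c2"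
  proof (rule ccontr)
    assume "c1 \<noteq> c2"
    then have "c1 = sub_node k w x (j - 1) \<and> c2 = sub_node k w x (Suc j) \<or>
        c1 = sub_node k w x (Suc j) \<and> c2 = sub_node k w x (j - 1)"
      using neighbour_Inr[OF e(1)] neighbour_Inr[OF e(2)] by blast
    then show False using not_both_neighbours_closer[OF s b _ _ fin'] d1 d2 by blast
  qed
qed

lemma unique_predecessor_Inl:
  assumes x: "x \<in> V" and y: "y \<in> V" and fin: "dist V' E' (Inl x) (Inl y) \<noteq> \<infinity>"
  shows "unique_predecessor V' E' (Inl x) (Inl y)"
  unfolding unique_predecessor_def
proof (intro allI impI)
  fix c1 c2
  assume e: "{c1, Inl y} \<in> E'" "{c2, Inl y} \<in> E'"
    and d: "dist V' E' (Inl x) c1 + 1 = dist V' E' (Inl x) (Inl y)"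
      "dist V' E' (Inl x) c2 + 1 = dist V' E' (Inl x) (Inl y)"
  have "c1 \<in> V'" "c2 \<in> V'" using subdiv_edge_vertices[OF e(1)] subdiv_edge_vertices[OF e(2)] by simp_all
  then have d1: "sdist (Inl x) c1 + 1 = odist x y" and d2: "sdist (Inl x) c2 + 1 = odist x y"
    and fin': "odist x y \<noteq> \<infinity>"
    using d fin dist_subdivision[of "Inl x"] x y by simp_all
  obtain g1 g2 where g1: "{y, g1} \<in> E" "c1 = step_toward y g1"
    and g2: "{y, g2} \<in> E" "c2 = step_toward y g2"
    using neighbour_Inl[OF e(1)] neighbour_Inl[OF e(2)] by blast
  have "dist V E x g1 + 1 = dist V E x y" "dist V E x g2 + 1 = dist V E x y"
    using step_toward_predecessor[OF x g1(1) _ fin'] step_toward_predecessor[OF x g2(1) _ fin']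
      d1 d2 g1(2) g2(2) by simp_all
  moreover have "unique_predecessor V E x y"
    using geodetic_imp_unique_predecessor[OF geodetic x y] fin' by (simp add: odist_eq_infinity_iff)
  moreover have "{g1, y} \<in> E" "{g2, y} \<in> E" using g1(1) g2(1) by (simp_all add: insert_commute)
  ultimately have "g1 = g2" unfolding unique_predecessor_def by blast
  then show "c1 = c2" using g1(2) g2(2) by simp
qed

theorem geodetic_subdivision: "geodetic V' E'"
proof (rule geodetic_if_unique_predecessor)
  fix a b assume a: "a \<in> V'" and b: "b \<in> V'" and fin: "dist V' E' a b \<noteq> \<infinity>"
  show "unique_predecessor V' E' a b \<or> unique_predecessor V' E' b a"
  proof (cases b rule: sum_prod3_cases)
    case (Inr w x j)
    then show ?thesis using unique_predecessor_Inr a b fin by simp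
  next
    case (Inl y)
    show ?thesis
    proof (cases a rule: sum_prod3_cases)
      case (Inl x)
      then show ?thesis using unique_predecessor_Inl a b fin \<open>b = Inl y\<close> by simp
    next
      case (Inr u v i)
      have "dist V' E' b a \<noteq> \<infinity>" using fin by (simp add: dist_sym)
      then show ?thesis using unique_predecessor_Inr[OF b] a Inr by simp
    qed
  qed
qed

end

theorem proposition1:
  fixes V :: "'a set" and E :: "'a set set" and S T :: "'a set" and k :: nat
  assumes "simple_graph V E"
    and "geodetic V E"
    and "S \<union> T = V" and "S \<inter> T = {}"
    and "geodetically_closed V E S" and "geodetically_closed V E T"
    and "\<And>u v w x. u \<in> S \<Longrightarrow> w \<in> S \<Longrightarrow> v \<in> T \<Longrightarrow> x \<in> T \<Longrightarrow>
           {u, v} \<in> E \<Longrightarrow> {w, x} \<in> E \<Longrightarrow> {u, v} \<noteq> {w, x} \<Longrightarrow>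
           \<exists>n. dist V E u w + dist V E v x = enat n \<and> odd n"
  shows "geodetic (subdiv_V V E S T k) (subdiv_E E S T k)"
proof -
  interpret odd_cut_subdivision V E S T k
    using assms by unfold_locales
  show ?thesis by (rule geodetic_subdivision)
qed

end
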